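(* Let $G=(V,E)$ be a finite, simple, connected graph such that $\kappa(x,y)\geq K>0$ for all adjacent vertices $x\sim y$. Then \[ \operatorname{diam}_{\operatorname{eff}}(G)\leq \frac{\max_{v\in V}\operatorname{Deg}(v)}{K}. \]
   Context: $d$ denotes the combinatorial graph distance and $\operatorname{Deg}(v)=|\{w\in V: w\sim v\}|$. The effective diameter is $\operatorname{diam}_{\operatorname{eff}}(G)=\frac{1}{|V|^2}\sum_{x,y\in V}d(x,y)$. The (non-normalized) Laplacian is $\Delta f(x)=\sum_{y\sim x}(f(y)-f(x))$ for $f:V\to\mathbb{R}$. The Ollivier curvature of an edge $x\sim y$ is $\kappa(x,y)=\inf\{\Delta f(x)-\Delta f(y) : f:V\to\mathbb{R},\ f(y)-f(x)=1,\ \max_{u\sim v}|f(u)-f(v)|=1\}$. *)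

theory Defs
  imports Complex_Main
begin

definition finite_simple_graph :: "'a set \<Rightarrow> ('a \<Rightarrow> 'a \<Rightarrow> bool) \<Rightarrow> bool" where
  "finite_simple_graph V E \<longleftrightarrow> finite V \<and>
     (\<forall>x y. E x y \<longrightarrow> x \<in> V \<and> y \<in> V) \<and>
     (\<forall>x y. E x y \<longrightarrow> E y x) \<and> (\<forall>x. \<not> E x x)"

definition walk :: "('a \<Rightarrow> 'a \<Rightarrow> bool) \<Rightarrow> 'a list \<Rightarrow> bool" where
  "walk E xs \<longleftrightarrow> xs \<noteq> [] \<and> (\<forall>i. Suc i < length xs \<longrightarrow> E (xs ! i) (xs ! Suc i))"

definition connected_graph :: "'a set \<Rightarrow> ('a \<Rightarrow> 'a \<Rightarrow> bool) \<Rightarrow> bool" where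
  "connected_graph V E \<longleftrightarrow> V \<noteq> {} \<and>
     (\<forall>x\<in>V. \<forall>y\<in>V. \<exists>xs. walk E xs \<and> hd xs = x \<and> last xs = y)"

definition gdist :: "('a \<Rightarrow> 'a \<Rightarrow> bool) \<Rightarrow> 'a \<Rightarrow> 'a \<Rightarrow> nat" where
  "gdist E x y = (LEAST n. \<exists>xs. walk E xs \<and> hd xs = x \<and> last xs = y \<and> length xs = Suc n)"

definition Deg :: "'a set \<Rightarrow> ('a \<Rightarrow> 'a \<Rightarrow> bool) \<Rightarrow> 'a \<Rightarrow> nat" where
  "Deg V E v = card {w \<in> V. E v w}"

definition diam_eff :: "'a set \<Rightarrow> ('a \<Rightarrow> 'a \<Rightarrow> bool) \<Rightarrow> real" where
  "diam_eff V E = (1 / (real (card V))^2) * (\<Sum>x\<in>V. \<Sum>y\<in>V. real (gdist E x y))"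

definition laplacian :: "'a set \<Rightarrow> ('a \<Rightarrow> 'a \<Rightarrow> bool) \<Rightarrow> ('a \<Rightarrow> real) \<Rightarrow> 'a \<Rightarrow> real" where
  "laplacian V E f x = (\<Sum>y\<in>{y \<in> V. E x y}. f y - f x)"

text \<open>Ollivier curvature of an edge x ~ y (Muench--Wojciechowski formula).\<close>
definition ollivier_curvature :: "'a set \<Rightarrow> ('a \<Rightarrow> 'a \<Rightarrow> bool) \<Rightarrow> 'a \<Rightarrow> 'a \<Rightarrow> real" where
  "ollivier_curvature V E x y = Inf {laplacian V E f x - laplacian V E f y | f.
      f y - f x = 1 \<and> Max {\<bar>f u - f v\<bar> | u v. u \<in> V \<and> v \<in> V \<and> E u v} = 1}"

end

theory Submission
  imports Defs
begin

text \<open>Fix a vertex z and put f = -d(\<cdot>, z), a 1-Lipschitz function. Along an edge x \<sim> x'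
  that decreases the distance to z, f increases by exactly 1, so the curvature bound gives
  \<Delta>f(x) - \<Delta>f(x') \<ge> K; telescoping along a geodesic yields \<Delta>f(x) - \<Delta>f(z) \<ge> K d(x, z).
  Since \<Delta>f(z) \<ge> -Deg(z) and \<Delta>f sums to zero over V, summing over x gives
  K \<cdot> \<Sum>{d(x, z) | x \<in> V} \<le> |V| Deg(z); summing over z gives the theorem.\<close>

definition one_lipschitz :: "('a \<Rightarrow> 'a \<Rightarrow> bool) \<Rightarrow> ('a \<Rightarrow> real) \<Rightarrow> bool" where
  "one_lipschitz E f \<longleftrightarrow> (\<forall>u v. E u v \<longrightarrow> \<bar>f u - f v\<bar> \<le> 1)"

lemma finite_simple_graphD:
  assumes "finite_simple_graph V E"
  shows "finite V" and "E u v \<Longrightarrow> u \<in> V" and "E u v \<Longrightarrow> v \<in> V" and "E u v \<Longrightarrow> E v u"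
  using assms unfolding finite_simple_graph_def by blast+

lemma gdist_le_walk:
  assumes "walk E xs" "hd xs = x" "last xs = y" "length xs = Suc n"
  shows "gdist E x y \<le> n"
  unfolding gdist_def using assms by (intro Least_le) blast

lemma gdist_walk:
  assumes "connected_graph V E" "x \<in> V" "y \<in> V"
  obtains xs where "walk E xs" "hd xs = x" "last xs = y" "length xs = Suc (gdist E x y)"
proof -
  obtain xs where xs: "walk E xs" "hd xs = x" "last xs = y"
    using assms unfolding connected_graph_def by blast
  then have "length xs = Suc (length xs - 1)"
    unfolding walk_def by (cases xs) auto
  with xs have "\<exists>n xs. walk E xs \<and> hd xs = x \<and> last xs = y \<and> length xs = Suc n"
    by blast
  then have "\<exists>xs. walk E xs \<and> hd xs = x \<and> last xs = y \<and> length xs = Suc (gdist E x y)"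
    unfolding gdist_def by (rule LeastI_ex)
  with that show thesis by blast
qed

lemma gdist_refl: "gdist E z z = 0"
proof -
  have "walk E [z]" unfolding walk_def by auto
  then show ?thesis using gdist_le_walk[of E "[z]" z z 0] by simp
qed

lemma gdist_eq_0D:
  assumes "connected_graph V E" "x \<in> V" "y \<in> V" "gdist E x y = 0"
  shows "x = y"
proof -
  obtain xs where "hd xs = x" "last xs = y" "length xs = Suc 0"
    using gdist_walk[OF assms(1-3)] assms(4) by metis
  then show ?thesis by (cases xs) auto
qed

lemma walk_Cons:
  assumes "walk E xs" "E u (hd xs)"
  shows "walk E (u # xs)"
  using assms unfolding walk_def by (auto simp: hd_conv_nth nth_Cons split: nat.split)

lemma gdist_edge_le:
  assumes "connected_graph V E" "E u v" "v \<in> V" "z \<in> V"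
  shows "gdist E u z \<le> gdist E v z + 1"
proof -
  obtain xs where xs: "walk E xs" "hd xs = v" "last xs = z" "length xs = Suc (gdist E v z)"
    using gdist_walk[OF assms(1,3,4)] .
  have "xs \<noteq> []" using xs(1) unfolding walk_def by auto
  with xs assms(2) show ?thesis
    by (intro gdist_le_walk[of E "u # xs"]) (auto intro: walk_Cons)
qed

lemma gdist_Suc_neighbour:
  assumes "finite_simple_graph V E" "connected_graph V E" "x \<in> V" "z \<in> V"
    and "gdist E x z = Suc m"
  obtains x' where "E x x'" "gdist E x' z = m"
proof -
  obtain xs where xs: "walk E xs" "hd xs = x" "last xs = z" "length xs = Suc (Suc m)"
    using gdist_walk[OF assms(2-4)] assms(5) by metis
  then obtain x' ys where xs_eq: "xs = x # x' # ys"
    by (cases xs; cases "tl xs") auto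
  have edge: "E x x'"
    using xs(1) unfolding xs_eq walk_def by force
  have "walk E (x' # ys)"
    using xs(1) unfolding xs_eq walk_def by auto
  then have "gdist E x' z \<le> m"
    using xs(3,4) unfolding xs_eq by (intro gdist_le_walk) auto
  moreover have "Suc m \<le> gdist E x' z + 1"
    using gdist_edge_le[OF assms(2) edge _ assms(4)] finite_simple_graphD(3)[OF assms(1) edge]
      assms(5) by simp
  ultimately show thesis using that edge by simp
qed

lemma one_lipschitz_gdist:
  assumes "finite_simple_graph V E" "connected_graph V E" "z \<in> V"
  shows "one_lipschitz E (\<lambda>w. - real (gdist E w z))"
  unfolding one_lipschitz_def
proof (intro allI impI)
  fix u v assume uv: "E u v"
  have "gdist E u z \<le> gdist E v z + 1" "gdist E v z \<le> gdist E u z + 1"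
    using gdist_edge_le[OF assms(2) uv] gdist_edge_le[OF assms(2) finite_simple_graphD(4)[OF assms(1) uv]]
      finite_simple_graphD(2,3)[OF assms(1) uv] assms(3) by auto
  then show "\<bar>- real (gdist E u z) - - real (gdist E v z)\<bar> \<le> 1" by linarith
qed

lemma sum_laplacian_eq_0:
  assumes "finite_simple_graph V E"
  shows "(\<Sum>x\<in>V. laplacian V E f x) = 0"
proof -
  note fin = finite_simple_graphD(1)[OF assms]
  have sym: "E x y = E y x" for x y using finite_simple_graphD(4)[OF assms] by blast
  define S where "S = (\<Sum>x\<in>V. \<Sum>y\<in>V. if E x y then f y - f x else 0)"
  have "S = (\<Sum>y\<in>V. \<Sum>x\<in>V. if E x y then f y - f x else 0)"
    unfolding S_def by (rule sum.swap)
  also have "\<dots> = (\<Sum>y\<in>V. \<Sum>x\<in>V. - (if E y x then f x - f y else 0))"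
    by (intro sum.cong refl) (simp add: sym)
  also have "\<dots> = - S" unfolding S_def by (simp add: sum_negf)
  finally have "S = 0" by simp
  then show ?thesis
    unfolding S_def laplacian_def using fin by (simp add: sum.inter_filter)
qed

lemma laplacian_bounds:
  assumes "one_lipschitz E f"
  shows "- real (Deg V E x) \<le> laplacian V E f x" and "laplacian V E f x \<le> real (Deg V E x)"
proof -
  have "\<bar>f w - f x\<bar> \<le> 1" if "w \<in> {w \<in> V. E x w}" for w
    using assms that unfolding one_lipschitz_def by (metis (mono_tags) abs_minus_commute mem_Collect_eq)
  then have lower: "- 1 \<le> f w - f x" and upper: "f w - f x \<le> 1" if "w \<in> {w \<in> V. E x w}" for w
    using that by (meson abs_le_D1 abs_le_D2 minus_le_iff)+
  have "(\<Sum>w\<in>{w \<in> V. E x w}. -1) \<le> laplacian V E f x"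
    unfolding laplacian_def using lower by (rule sum_mono)
  moreover have "laplacian V E f x \<le> (\<Sum>w\<in>{w \<in> V. E x w}. 1)"
    unfolding laplacian_def using upper by (rule sum_mono)
  ultimately show "- real (Deg V E x) \<le> laplacian V E f x" and "laplacian V E f x \<le> real (Deg V E x)"
    unfolding Deg_def by simp_all
qed

lemma ollivier_curvature_le_laplacian_diff:
  assumes G: "finite_simple_graph V E"
    and edge: "E x y"
    and lip: "one_lipschitz E f"
    and grad: "f y - f x = 1"
  shows "ollivier_curvature V E x y \<le> laplacian V E f x - laplacian V E f y"
proof -
  define gradients where "gradients h = {\<bar>h u - h v\<bar> | u v. u \<in> V \<and> v \<in> V \<and> E u v}"
    for h :: "'a \<Rightarrow> real"
  define A where "A = {laplacian V E h x - laplacian V E h y | h. h y - h x = 1 \<and> Max (gradients h) = 1}"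
  have fin: "finite (gradients h)" for h
  proof -
    have "gradients h \<subseteq> (\<lambda>(u, v). \<bar>h u - h v\<bar>) ` (V \<times> V)"
      unfolding gradients_def by auto
    then show ?thesis using finite_simple_graphD(1)[OF G] by (auto intro: finite_subset)
  qed
  have "\<bar>f x - f y\<bar> \<in> gradients f"
    unfolding gradients_def using edge finite_simple_graphD(2,3)[OF G] by blast
  then have "Max (gradients f) = 1"
    using lip grad by (intro Max_eqI[OF fin]) (auto simp: gradients_def one_lipschitz_def)
  with grad have mem: "laplacian V E f x - laplacian V E f y \<in> A"
    unfolding A_def by blast
  have "- real (Deg V E x) - real (Deg V E y) \<le> a" if "a \<in> A" for a
  proof -
    obtain h where a: "a = laplacian V E h x - laplacian V E h y" and "Max (gradients h) = 1"
      using \<open>a \<in> A\<close> unfolding A_def by blast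
    have "one_lipschitz E h"
      unfolding one_lipschitz_def
    proof (intro allI impI)
      fix u v assume "E u v"
      then have "\<bar>h u - h v\<bar> \<in> gradients h"
        unfolding gradients_def using finite_simple_graphD(2,3)[OF G] by blast
      then show "\<bar>h u - h v\<bar> \<le> 1"
        using Max_ge[OF fin] \<open>Max (gradients h) = 1\<close> by metis
    qed
    then show ?thesis unfolding a using laplacian_bounds[of E h V] by (smt (verit))
  qed
  then have "bdd_below A" by (rule bdd_belowI)
  then show ?thesis
    unfolding ollivier_curvature_def using cInf_lower[OF mem]
    by (simp add: A_def gradients_def)
qed

lemma gdist_le_laplacian_diff:
  assumes G: "finite_simple_graph V E" "connected_graph V E"
    and curv: "\<And>x y. x \<in> V \<Longrightarrow> y \<in> V \<Longrightarrow> E x y \<Longrightarrow> ollivier_curvature V E x y \<ge> K"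
    and z: "z \<in> V" and x: "x \<in> V"
  defines "f \<equiv> \<lambda>w. - real (gdist E w z)"
  shows "real (gdist E x z) * K \<le> laplacian V E f x - laplacian V E f z"
  using x
proof (induction "gdist E x z" arbitrary: x)
  case 0
  then have "x = z" using gdist_eq_0D[OF G(2) _ z] by simp
  with 0 show ?case by simp
next
  case (Suc m)
  obtain x' where edge: "E x x'" and dist: "gdist E x' z = m"
    using gdist_Suc_neighbour[OF G \<open>x \<in> V\<close> z Suc(2)[symmetric]] .
  have x': "x' \<in> V" using finite_simple_graphD(3)[OF G(1) edge] .
  have "K \<le> ollivier_curvature V E x x'"
    using curv[OF \<open>x \<in> V\<close> x' edge] .
  also have "\<dots> \<le> laplacian V E f x - laplacian V E f x'"
    using one_lipschitz_gdist[OF G z] Suc(2) dist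
    by (intro ollivier_curvature_le_laplacian_diff[OF G(1) edge]) (auto simp: f_def)
  finally have "K \<le> laplacian V E f x - laplacian V E f x'" .
  moreover have "real m * K \<le> laplacian V E f x' - laplacian V E f z"
    using Suc(1)[OF dist[symmetric] x'] dist by simp
  ultimately show ?case
    by (simp add: Suc(2)[symmetric] algebra_simps)
qed

lemma sum_gdist_le_Deg:
  assumes G: "finite_simple_graph V E" "connected_graph V E"
    and curv: "\<And>x y. x \<in> V \<Longrightarrow> y \<in> V \<Longrightarrow> E x y \<Longrightarrow> ollivier_curvature V E x y \<ge> K"
    and z: "z \<in> V"
  shows "K * (\<Sum>x\<in>V. real (gdist E x z)) \<le> real (card V) * real (Deg V E z)"
proof -
  define f where "f = (\<lambda>w. - real (gdist E w z))"
  have "K * (\<Sum>x\<in>V. real (gdist E x z)) = (\<Sum>x\<in>V. real (gdist E x z) * K)"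
    by (simp add: sum_distrib_left mult.commute)
  also have "\<dots> \<le> (\<Sum>x\<in>V. laplacian V E f x + real (Deg V E z))"
  proof (rule sum_mono)
    fix x assume "x \<in> V"
    then show "real (gdist E x z) * K \<le> laplacian V E f x + real (Deg V E z)"
      using gdist_le_laplacian_diff[OF G curv z] laplacian_bounds(1)[OF one_lipschitz_gdist[OF G z]]
      unfolding f_def by (smt (verit))
  qed
  also have "\<dots> = real (card V) * real (Deg V E z)"
    using sum_laplacian_eq_0[OF G(1)] by (simp add: sum.distrib)
  finally show ?thesis .
qed

theorem theorem3p1:
  fixes V :: "'a set" and E :: "'a \<Rightarrow> 'a \<Rightarrow> bool" and K :: real
  assumes "finite_simple_graph V E"
    and "connected_graph V E"
    and "K > 0"
    and "\<And>x y. x \<in> V \<Longrightarrow> y \<in> V \<Longrightarrow> E x y \<Longrightarrow> ollivier_curvature V E x y \<ge> K"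
  shows "diam_eff V E \<le> real (Max (Deg V E ` V)) / K"
proof -
  define D where "D = Max (Deg V E ` V)"
  have fin: "finite V" using finite_simple_graphD(1)[OF assms(1)] .
  have card_pos: "real (card V) ^ 2 > 0"
    using fin assms(2) by (simp add: card_gt_0_iff connected_graph_def)
  have "K * (\<Sum>x\<in>V. \<Sum>z\<in>V. real (gdist E x z)) = (\<Sum>z\<in>V. K * (\<Sum>x\<in>V. real (gdist E x z)))"
    by (subst sum.swap) (simp add: sum_distrib_left)
  also have "\<dots> \<le> (\<Sum>z\<in>V. real (card V) * real D)"
  proof (rule sum_mono)
    fix z assume z: "z \<in> V"
    have "Deg V E z \<le> D" unfolding D_def using fin z by simp
    then show "K * (\<Sum>x\<in>V. real (gdist E x z)) \<le> real (card V) * real D"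
      using sum_gdist_le_Deg[OF assms(1,2,4) z] by (smt (verit) mult_left_mono of_nat_0_le_iff of_nat_mono)
  qed
  also have "\<dots> = real (card V) ^ 2 * real D" by (simp add: power2_eq_square)
  finally show ?thesis
    using card_pos assms(3) unfolding diam_eff_def D_def by (simp add: divide_simps mult.commute)
qed

end
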